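(* Let $n\in\{1,3,7\}$ and let $m:\mathbb{S}^n\times\mathbb{S}^n\to\mathbb{S}^n$ be the multiplication map of unit complex numbers, quaternions or octonions respectively. Then $L_m(\mathbb{S}^n\times\mathbb{S}^n)=\sqrt{2}$.
   Context: $\mathbb{S}^n$ is the unit round sphere and $\mathbb{S}^n\times\mathbb{S}^n$ has the product Riemannian metric with its geodesic distance. $L_g(M)$ denotes the Lipschitz constant of a map $g$ on $M$, i.e. the smallest $C$ with $d(g(a),g(b))\le C\,d(a,b)$ for all $a,b\in M$. *)

theory Defs
  imports "HOL-Analysis.Analysis"
begin

definition vinner :: "real list \<Rightarrow> real list \<Rightarrow> real" where
  "vinner x y = sum_list (map2 (*) x y)"

definition vadd :: "real list \<Rightarrow> real list \<Rightarrow> real list" where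
  "vadd x y = map2 (+) x y"

definition sph :: "nat \<Rightarrow> real list set" where
  "sph n = {x. length x = n + 1 \<and> vinner x x = 1}"

definition sph_dist :: "real list \<Rightarrow> real list \<Rightarrow> real" where
  "sph_dist x y = arccos (vinner x y)"

text \<open>Geodesic distance of the product Riemannian metric on S^n x S^n.\<close>
definition prod_dist :: "real list \<times> real list \<Rightarrow> real list \<times> real list \<Rightarrow> real" where
  "prod_dist p q = sqrt ((sph_dist (fst p) (fst q))^2 + (sph_dist (snd p) (snd q))^2)"

text \<open>Cayley--Dickson construction on R^(2^k): level 0 = reals, 1 = complex numbers,
  2 = quaternions, 3 = octonions.  (a,b)^* = (a^*, -b),
  (a,b)(c,d) = (ac - d^* b, d a + b c^*).\<close>
fun cd_conj :: "nat \<Rightarrow> real list \<Rightarrow> real list" where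
  "cd_conj 0 x = x"
| "cd_conj (Suc k) x = cd_conj k (take (2^k) x) @ map uminus (drop (2^k) x)"

fun cd_mult :: "nat \<Rightarrow> real list \<Rightarrow> real list \<Rightarrow> real list" where
  "cd_mult 0 x y = [hd x * hd y]"
| "cd_mult (Suc k) x y =
     (let a = take (2^k) x; b = drop (2^k) x; c = take (2^k) y; d = drop (2^k) y
      in vadd (cd_mult k a c) (map uminus (cd_mult k (cd_conj k d) b))
         @ vadd (cd_mult k d a) (cd_mult k b (cd_conj k c)))"

definition lip_const :: "'a set \<Rightarrow> ('a \<Rightarrow> 'a \<Rightarrow> real) \<Rightarrow> ('b \<Rightarrow> 'b \<Rightarrow> real) \<Rightarrow> ('a \<Rightarrow> 'b) \<Rightarrow> real" where
  "lip_const M dM dN g = Inf {C. \<forall>a\<in>M. \<forall>b\<in>M. dN (g a) (g b) \<le> C * dM a b}"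

end

theory Submission
  imports Defs
begin

text \<open>For unit x the maps y \<mapsto> x y and y \<mapsto> y x are isometries of the sphere, by the
  composition-algebra identity \<open>\<langle>x y, x' y'\<rangle> + \<langle>x y', x' y\<rangle> = 2 \<langle>x, x'\<rangle> \<langle>y, y'\<rangle>\<close>, which holds in
  the Cayley--Dickson algebras up to the octonions.  Passing through x y' gives
  d(x y, x' y') \<le> d(x, x') + d(y, y') \<le> \<surd>2 \<cdot> d((x, y), (x', y')).  Equality is attained at
  (1, 1) and (i, i): these points are at product distance \<pi>/\<surd>2, while 1 \<cdot> 1 = 1 and i \<cdot> i = -1
  are antipodal.\<close>

lemma vinner_commute: "vinner x y = vinner y x"
  unfolding vinner_def by (induction x y rule: list_induct2') (simp_all add: mult.commute)

lemma vinner_eq_sum_nth: "length y = length x \<Longrightarrow> vinner x y = (\<Sum>i<length x. x ! i * y ! i)"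
  unfolding vinner_def by (simp add: sum_list_sum_nth atLeast0LessThan)

lemma Gram_det_unit_sum_nonneg:
  fixes u v w :: "'i \<Rightarrow> real"
  assumes "(\<Sum>i\<in>I. (u i)\<^sup>2) = 1" "(\<Sum>i\<in>I. (v i)\<^sup>2) = 1" "(\<Sum>i\<in>I. (w i)\<^sup>2) = 1"
  defines "p \<equiv> \<Sum>i\<in>I. u i * v i" and "q \<equiv> \<Sum>i\<in>I. v i * w i" and "r \<equiv> \<Sum>i\<in>I. u i * w i"
  shows "(r - p * q)\<^sup>2 \<le> (1 - p\<^sup>2) * (1 - q\<^sup>2)"
proof -
  text \<open>Cauchy--Schwarz for the components of u and w orthogonal to v.\<close>
  have "(\<Sum>i\<in>I. (u i - p * v i) * (w i - q * v i))\<^sup>2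
          \<le> (\<Sum>i\<in>I. (u i - p * v i)\<^sup>2) * (\<Sum>i\<in>I. (w i - q * v i)\<^sup>2)"
    by (rule Cauchy_Schwarz_ineq_sum)
  moreover have "(\<Sum>i\<in>I. (u i - p * v i) * (w i - q * v i)) = r - p * q"
  proof -
    have "(\<Sum>i\<in>I. (u i - p * v i) * (w i - q * v i))
        = (\<Sum>i\<in>I. u i * w i - q * (u i * v i) - p * (v i * w i) + p * q * (v i)\<^sup>2)"
      by (rule sum.cong) (simp_all add: algebra_simps power2_eq_square)
    also have "\<dots> = r - q * p - p * q + p * q * 1"
      by (simp only: sum.distrib sum_subtractf sum_distrib_left[symmetric] p_def q_def r_def assms(2))
    finally show ?thesis by simp
  qed
  moreover have "(\<Sum>i\<in>I. (x i - c * v i)\<^sup>2) = 1 - c\<^sup>2"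
    if "(\<Sum>i\<in>I. (x i)\<^sup>2) = 1" "c = (\<Sum>i\<in>I. x i * v i)" for x c
  proof -
    have "(\<Sum>i\<in>I. (x i - c * v i)\<^sup>2) = (\<Sum>i\<in>I. (x i)\<^sup>2 - 2 * c * (x i * v i) + c\<^sup>2 * (v i)\<^sup>2)"
      by (rule sum.cong) (simp_all add: algebra_simps power2_eq_square)
    also have "\<dots> = 1 - 2 * c * c + c\<^sup>2 * 1"
      by (simp only: sum.distrib sum_subtractf sum_distrib_left[symmetric] that assms(2))
    finally show ?thesis by (simp add: power2_eq_square)
  qed
  moreover have "q = (\<Sum>i\<in>I. w i * v i)"
    unfolding q_def by (simp add: mult.commute)
  ultimately show ?thesis
    using assms(1,3) p_def by simp
qed

lemma arccos_le_add_arccos: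
  fixes p q r :: real
  assumes "\<bar>p\<bar> \<le> 1" "\<bar>q\<bar> \<le> 1" "\<bar>r\<bar> \<le> 1" "(r - p * q)\<^sup>2 \<le> (1 - p\<^sup>2) * (1 - q\<^sup>2)"
  shows "arccos r \<le> arccos p + arccos q"
proof (cases "arccos p + arccos q \<le> pi")
  case True
  have "\<bar>r - p * q\<bar> \<le> sqrt (1 - p\<^sup>2) * sqrt (1 - q\<^sup>2)"
    using assms(4) by (metis real_sqrt_abs real_sqrt_le_mono real_sqrt_mult)
  then have "cos (arccos p + arccos q) \<le> r"
    using assms(1,2) by (simp add: cos_add sin_arccos_abs)
  then have "arccos r \<le> arccos (cos (arccos p + arccos q))"
    using assms(3) by (intro arccos_le_arccos) auto
  also have "\<dots> = arccos p + arccos q"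
    using True assms(1,2) by (intro arccos_cos) (auto intro!: add_nonneg_nonneg arccos_lbound)
  finally show ?thesis .
next
  case False
  then show ?thesis
    using arccos_ubound[of r] assms(3) by linarith
qed

lemma sph_dist_triangle:
  assumes "length v = length u" "length w = length u"
    and "vinner u u = 1" "vinner v v = 1" "vinner w w = 1"
  shows "sph_dist u w \<le> sph_dist u v + sph_dist v w"
proof -
  have unit: "(\<Sum>i<length u. (x ! i)\<^sup>2) = 1" if "x \<in> {u, v, w}" for x
    using that assms by (auto simp: vinner_eq_sum_nth power2_eq_square)
  have bounded: "\<bar>vinner x y\<bar> \<le> 1" if "x \<in> {u, v, w}" "y \<in> {u, v, w}" for x y
  proof -
    have "(vinner x y)\<^sup>2 \<le> 1"
      using Cauchy_Schwarz_ineq_sum[of "\<lambda>i. x ! i" "\<lambda>i. y ! i" "{..<length u}"] unit[OF that(1)] unit[OF that(2)]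
        that assms(1,2) by (auto simp: vinner_eq_sum_nth)
    then show ?thesis
      by (simp add: abs_square_le_1)
  qed
  have "arccos (vinner u w) \<le> arccos (vinner u v) + arccos (vinner v w)"
    using Gram_det_unit_sum_nonneg[OF unit unit unit] assms(1,2)
    by (intro arccos_le_add_arccos bounded) (auto simp: vinner_eq_sum_nth)
  then show ?thesis
    unfolding sph_dist_def .
qed

lemma length_cd_mult: "length (cd_mult k x y) = 2 ^ k"
  by (induction k arbitrary: x y) (simp_all add: Let_def vadd_def)

lemma cd_mult_numeral:
  "cd_mult (numeral w) x y =
     (let m = 2 ^ pred_numeral w; a = take m x; b = drop m x; c = take m y; d = drop m y
      in vadd (cd_mult (pred_numeral w) a c) (map uminus (cd_mult (pred_numeral w) (cd_conj (pred_numeral w) d) b))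
         @ vadd (cd_mult (pred_numeral w) d a) (cd_mult (pred_numeral w) b (cd_conj (pred_numeral w) c)))"
  by (simp only: numeral_eq_Suc cd_mult.simps(2) Let_def)

lemma cd_conj_numeral:
  "cd_conj (numeral w) x =
     cd_conj (pred_numeral w) (take (2 ^ pred_numeral w) x) @ map uminus (drop (2 ^ pred_numeral w) x)"
  by (simp only: numeral_eq_Suc cd_conj.simps(2))

lemma cd_conj_Suc_0: "cd_conj (Suc 0) [a0, a1] = [a0, - a1]"
  by (simp add: numeral_eq_Suc)

lemma cd_mult_Suc_0: "cd_mult (Suc 0) [a0, a1] [b0, b1] = [a0 * b0 - b1 * a1, b1 * a0 + a1 * b0]"
  by (simp add: vadd_def)

text \<open>Simplifying with the recursion equations is very slow even on concrete lists;
  such products are evaluated with \<open>cd_eval\<close> instead.\<close>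
declare cd_mult.simps(2) [simp del] cd_conj.simps(2) [simp del]

lemmas cd_eval = upt_rec cd_mult_numeral cd_conj_numeral cd_mult_Suc_0 cd_conj_Suc_0 Let_def vadd_def vinner_def

lemma cd_mult_polarized_composition_map:
  fixes a b c d :: "nat \<Rightarrow> real"
  assumes "k \<le> 3"
  defines "list_of f \<equiv> map f [0..<2 ^ k]"
  shows "vinner (cd_mult k (list_of a) (list_of b)) (cd_mult k (list_of c) (list_of d))
           + vinner (cd_mult k (list_of a) (list_of d)) (cd_mult k (list_of c) (list_of b))
         = 2 * vinner (list_of a) (list_of c) * vinner (list_of b) (list_of d)"
proof -
  consider "k = 0" | "k = 1" | "k = 2" | "k = 3"
    using assms(1) by fastforce
  then show ?thesis
  proof cases
    case 1
    show ?thesis unfolding 1 list_of_def by (simp add: cd_eval)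
  next
    case 2
    show ?thesis unfolding 2 list_of_def by (simp add: cd_eval) algebra
  next
    case 3
    show ?thesis unfolding 3 list_of_def by (simp add: cd_eval) algebra
  next
    case 4
    show ?thesis unfolding 4 list_of_def by (simp add: cd_eval) algebra
  qed
qed

lemma cd_mult_polarized_composition:
  assumes "k \<le> 3" "length x = 2 ^ k" "length x' = 2 ^ k" "length y = 2 ^ k" "length y' = 2 ^ k"
  shows "vinner (cd_mult k x y) (cd_mult k x' y') + vinner (cd_mult k x y') (cd_mult k x' y)
       = 2 * vinner x x' * vinner y y'"
  using cd_mult_polarized_composition_map[OF assms(1), of "(!) x" "(!) y" "(!) x'" "(!) y'"] assms(2-)
  by (metis map_nth)

lemma vinner_cd_mult_left:
  assumes "k \<le> 3" "length x = 2 ^ k" "length y = 2 ^ k" "length y' = 2 ^ k"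
  shows "vinner (cd_mult k x y) (cd_mult k x y') = vinner x x * vinner y y'"
  using cd_mult_polarized_composition[OF assms(1,2,2,3,4)] by (simp add: vinner_commute)

lemma vinner_cd_mult_right:
  assumes "k \<le> 3" "length x = 2 ^ k" "length x' = 2 ^ k" "length y = 2 ^ k"
  shows "vinner (cd_mult k x y) (cd_mult k x' y) = vinner x x' * vinner y y"
  using cd_mult_polarized_composition[OF assms(1,2,3,4,4)] by simp

lemma add_le_sqrt2_mult_sqrt_sum_squares: "a + b \<le> sqrt 2 * sqrt (a\<^sup>2 + b\<^sup>2)"
proof -
  have "a + b \<le> sqrt ((a + b)\<^sup>2)"
    by simp
  also have "\<dots> \<le> sqrt (2 * (a\<^sup>2 + b\<^sup>2))"
    using zero_le_power2[of "a - b"] by (intro real_sqrt_le_mono) (simp add: power2_eq_square algebra_simps)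
  also have "\<dots> = sqrt 2 * sqrt (a\<^sup>2 + b\<^sup>2)"
    by (rule real_sqrt_mult)
  finally show ?thesis .
qed

lemma sph_dist_cd_mult_le:
  assumes "k \<le> 3" "x \<in> sph (2 ^ k - 1)" "x' \<in> sph (2 ^ k - 1)" "y \<in> sph (2 ^ k - 1)" "y' \<in> sph (2 ^ k - 1)"
  shows "sph_dist (cd_mult k x y) (cd_mult k x' y') \<le> sph_dist x x' + sph_dist y y'"
proof -
  have len: "length z = 2 ^ k" and unit: "vinner z z = 1" if "z \<in> {x, x', y, y'}" for z
    using that assms(2-) by (auto simp: sph_def)
  note left = vinner_cd_mult_left[OF assms(1) len len len]
  note right = vinner_cd_mult_right[OF assms(1) len len len]
  have "sph_dist (cd_mult k x y) (cd_mult k x' y')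
          \<le> sph_dist (cd_mult k x y) (cd_mult k x y') + sph_dist (cd_mult k x y') (cd_mult k x' y')"
    by (intro sph_dist_triangle) (simp_all add: length_cd_mult left right unit)
  also have "\<dots> = sph_dist y y' + sph_dist x x'"
    by (simp add: sph_dist_def left right unit)
  finally show ?thesis
    by simp
qed

lemma sph_dist_cd_mult_le_sqrt2_prod_dist:
  assumes "k \<le> 3" "x \<in> sph (2 ^ k - 1)" "x' \<in> sph (2 ^ k - 1)" "y \<in> sph (2 ^ k - 1)" "y' \<in> sph (2 ^ k - 1)"
  shows "sph_dist (cd_mult k x y) (cd_mult k x' y') \<le> sqrt 2 * prod_dist (x, y) (x', y')"
  using sph_dist_cd_mult_le[OF assms] add_le_sqrt2_mult_sqrt_sum_squares[of "sph_dist x x'" "sph_dist y y'"]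
  unfolding prod_dist_def by simp


definition basis_list :: "nat \<Rightarrow> nat \<Rightarrow> real list" where
  "basis_list n j = map (\<lambda>i. if i = j then 1 else 0) [0..<n]"

lemma vinner_basis_list:
  "vinner (basis_list n i) (basis_list n j) = (if i = j \<and> i < n then 1 else 0)"
  by (simp add: basis_list_def vinner_eq_sum_nth if_distrib[of "\<lambda>x. x * _"] cong: if_cong)

lemma basis_list_in_sph: "j \<le> n \<Longrightarrow> basis_list (Suc n) j \<in> sph n"
  by (simp add: sph_def vinner_basis_list) (simp add: basis_list_def)

lemma cd_mult_basis_list_squares:
  assumes "1 \<le> k" "k \<le> 3"
  shows "vinner (cd_mult k (basis_list (2 ^ k) 0) (basis_list (2 ^ k) 0))
                (cd_mult k (basis_list (2 ^ k) 1) (basis_list (2 ^ k) 1)) = - 1"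
proof -
  consider "k = 1" | "k = 2" | "k = 3"
    using assms by fastforce
  then show ?thesis
    by cases (simp_all add: basis_list_def cd_eval)
qed

lemma lip_const_eqI:
  assumes bound: "\<And>a b. a \<in> M \<Longrightarrow> b \<in> M \<Longrightarrow> dN (g a) (g b) \<le> L * dM a b"
    and nonneg: "\<And>a b. a \<in> M \<Longrightarrow> b \<in> M \<Longrightarrow> 0 \<le> dM a b"
    and attained: "a \<in> M" "b \<in> M" "0 < dM a b" "dN (g a) (g b) = L * dM a b"
  shows "lip_const M dM dN g = L"
proof -
  have "{C. \<forall>a\<in>M. \<forall>b\<in>M. dN (g a) (g b) \<le> C * dM a b} = {L..}"
  proof (intro set_eqI iffI)
    fix C
    assume "C \<in> {C. \<forall>a\<in>M. \<forall>b\<in>M. dN (g a) (g b) \<le> C * dM a b}"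
    then have "dN (g a) (g b) \<le> C * dM a b"
      using attained(1,2) by blast
    then show "C \<in> {L..}"
      using attained(3,4) by simp
  next
    fix C
    assume "C \<in> {L..}"
    then have "L * dM a' b' \<le> C * dM a' b'" if "a' \<in> M" "b' \<in> M" for a' b'
      using nonneg[OF that] by (simp add: mult_right_mono)
    then show "C \<in> {C. \<forall>a\<in>M. \<forall>b\<in>M. dN (g a) (g b) \<le> C * dM a b}"
      using bound order_trans by blast
  qed
  then show ?thesis
    by (simp add: lip_const_def)
qed

theorem proposition3:
  fixes n k :: nat
  assumes "n \<in> {1, 3, 7}" and "2 ^ k = n + 1"
  shows "lip_const (sph n \<times> sph n) prod_dist sph_dist (\<lambda>(x, y). cd_mult k x y) = sqrt 2"
proof -
  have k: "1 \<le> k" "k \<le> 3"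
    using power_strict_increasing_iff[of "2::nat" 0 k] power_strict_increasing_iff[of "2::nat" k 4] assms
    by auto
  have n: "n = 2 ^ k - 1"
    using assms(2) by simp
  define e where "e = basis_list (2 ^ k) 0"
  define i where "i = basis_list (2 ^ k) 1"
  have e_i_in_sph: "e \<in> sph n" "i \<in> sph n"
    using assms basis_list_in_sph[of 0 n] basis_list_in_sph[of 1 n] by (auto simp: e_def i_def)
  have right_angle: "sph_dist e i = pi / 2"
    using k by (simp add: sph_dist_def e_def i_def vinner_basis_list)
  have dist_ei: "prod_dist (e, e) (i, i) = sqrt 2 * (pi / 2)"
    unfolding prod_dist_def fst_conv snd_conv right_angle by (simp add: real_sqrt_mult)
  show ?thesis
  proof (rule lip_const_eqI)
    fix p q
    assume "p \<in> sph n \<times> sph n" "q \<in> sph n \<times> sph n"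
    then show "sph_dist ((\<lambda>(x, y). cd_mult k x y) p) ((\<lambda>(x, y). cd_mult k x y) q) \<le> sqrt 2 * prod_dist p q"
      using sph_dist_cd_mult_le_sqrt2_prod_dist[OF k(2)] by (auto simp: n)
  next
    show "0 \<le> prod_dist p q" for p q
      by (simp add: prod_dist_def)
  next
    show "(e, e) \<in> sph n \<times> sph n" "(i, i) \<in> sph n \<times> sph n" "0 < prod_dist (e, e) (i, i)"
      using e_i_in_sph by (simp_all add: dist_ei)
  next
    show "sph_dist ((\<lambda>(x, y). cd_mult k x y) (e, e)) ((\<lambda>(x, y). cd_mult k x y) (i, i))
        = sqrt 2 * prod_dist (e, e) (i, i)"
      unfolding dist_ei using cd_mult_basis_list_squares[OF k] by (simp add: sph_dist_def e_def i_def)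
  qed
qed

end
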